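(* We have $\mathfrak{b}_1^2(x) + \mathfrak{b}_{-1}^2(x) > 0$ for every $x \in \mathbb{R}$, and also \[ \mathrm{span} \{\mathfrak{b}_{\pm 1}(\cdot)\} = \mathrm{span} \{\cos(2\pi \cdot),\sin(2\pi \cdot)\} = \{L \sin(2\pi\cdot + \eta) : L,\eta \in \mathbb{R} \}. \]
   Context: For a traveling pulse $u^*$ (speed $c$) of $\mathrm{d}u=Au\,\mathrm{d}t+f(u)\,\mathrm{d}t$ on $\mathcal X=H^{s,p}(\mathbb{R};\mathbb{R}^n)$ with linearization $\mathcal L=A+c\partial_x+f'(u^* )$, let $\psi$ be the bounded functional with $\Pi^cf=-\langle\psi,f\rangle\partial_xu^*$, $\Pi^c$ the spectral projection onto $\mathrm{span}\{\partial_xu^*\}$. Let $\mathcal T_xf=f(\cdot-x)$ and $\pi_{\mathrm{iso}}$ the isochron map (upright $\pi$ in the paper, not the circle constant; defined by $\lim_{t\to\infty}\|u^v(t)-u^*(\cdot-ct-\pi_{\mathrm{iso}}(v))\|_{\mathcal X}=0$), which satisfies $\pi_{\mathrm{iso}}'(\mathcal T_xu^* )[v]=\langle\mathcal T_x\psi,v\rangle$. Noise basis $e_1(x)=\sqrt2\cos(2\pi x)$, $e_{-1}(x)=-\sqrt2\sin(2\pi x)$ (generally $e_k=\sqrt2\cos(2\pi kx)$ for $k>0$, $e_0=1$, $e_k=\sqrt2\sin(2\pi kx)$ for $k<0$), noise coefficients $\alpha_k$, nonlinearity $g$. Define $\mathfrak b_k(x)=\alpha_k\pi_{\mathrm{iso}}'(\mathcal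 T_xu^* )[g(\mathcal T_xu^* )e_k]=\alpha_k\langle\mathcal T_x[\psi g(u^* )],e_k\rangle$. Assume $\alpha_1\ne0$, $\alpha_{-1}\ne0$ and that there exists $x\in\mathbb{R}$ with $\langle\psi g(u^* ),\sin(2\pi\cdot+x)\rangle\ne0$. *)

theory Defs
  imports "HOL-Analysis.Analysis" "HOL-Library.Function_Algebras"
begin

definition ebasis :: "int \<Rightarrow> real \<Rightarrow> real" where
  "ebasis k x = (if k = 0 then 1
     else if k > 0 then sqrt 2 * cos (2 * pi * real_of_int k * x)
     else sqrt 2 * sin (2 * pi * real_of_int k * x))"

definition pairing :: "(real \<Rightarrow> real) \<Rightarrow> (real \<Rightarrow> real) \<Rightarrow> real" where
  "pairing f g = (\<integral>y. f y * g y \<partial>lborel)"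

definition transl :: "real \<Rightarrow> (real \<Rightarrow> real) \<Rightarrow> real \<Rightarrow> real" where
  "transl x f = (\<lambda>y. f (y - x))"

text \<open>b_k(x) = alpha_k < T_x [psi g(u*)], e_k >, with h standing for the scalar function psi g(u*).\<close>
definition bfrak :: "(int \<Rightarrow> real) \<Rightarrow> (real \<Rightarrow> real) \<Rightarrow> int \<Rightarrow> real \<Rightarrow> real" where
  "bfrak \<alpha> h k x = \<alpha> k * pairing (transl x h) (ebasis k)"

definition fscale :: "real \<Rightarrow> ('a \<Rightarrow> real) \<Rightarrow> 'a \<Rightarrow> real" where
  "fscale c f = (\<lambda>x. c * f x)"

abbreviation fspan :: "('a \<Rightarrow> real) set \<Rightarrow> ('a \<Rightarrow> real) set" where
  "fspan \<equiv> module.span fscale"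

end

theory Submission imports Defs begin

(* Translating h by x rotates its Fourier coefficients (C, S) = (<h, cos (2 pi .)>, <h, sin (2 pi .)>)
   by the angle 2 pi x, so b_1 and b_(-1) are the two rows of a rotation applied to (C, S), scaled by
   the nonzero factors sqrt 2 alpha_1 and -sqrt 2 alpha_(-1).  The nondegeneracy hypothesis says
   exactly that (C, S) \<noteq> 0.  A rotation preserves C^2 + S^2, which gives positivity, and the
   change of basis from (cos (2 pi .), sin (2 pi .)) to (b_1, b_(-1)) has determinant
   -2 alpha_1 alpha_(-1) (C^2 + S^2) \<noteq> 0, which gives the span.  The last equality is the polar
   form a cos t + b sin t = L sin (t + eta). *)

lemma module_fscale: "module (fscale :: real \<Rightarrow> ('a \<Rightarrow> real) \<Rightarrow> _)"
  by unfold_locales (auto simp: fscale_def algebra_simps)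

lemma fspan_pair: "fspan {f, g} = {(\<lambda>x. a * f x + b * g x) | a b. True}"
  for f g :: "'a \<Rightarrow> real"
proof -
  interpret module "fscale :: real \<Rightarrow> ('a \<Rightarrow> real) \<Rightarrow> _" by (rule module_fscale)
  have "u - fscale a f - fscale b g = 0 \<longleftrightarrow> u = (\<lambda>x. a * f x + b * g x)" for u a b
    by (auto simp: fun_eq_iff fscale_def algebra_simps)
  then show ?thesis
    unfolding span_insert span_empty by auto
qed

lemma fspan_pair_eq_fspan_pair:
  fixes f g :: "'a \<Rightarrow> real"
  assumes "f' = (\<lambda>x. a * f x + b * g x)" and "g' = (\<lambda>x. c * f x + d * g x)"
    and det: "a * d - b * c \<noteq> 0"
  shows "fspan {f', g'} = fspan {f, g}"
proof -
  interpret module "fscale :: real \<Rightarrow> ('a \<Rightarrow> real) \<Rightarrow> _" by (rule module_fscale)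
  define \<delta> where "\<delta> = a * d - b * c"
  have "d * f' x - b * g' x = \<delta> * f x" "a * g' x - c * f' x = \<delta> * g x" for x
    by (simp_all add: assms(1,2) \<delta>_def algebra_simps)
  then have "f = (\<lambda>x. (d / \<delta>) * f' x + (- b / \<delta>) * g' x)"
    and "g = (\<lambda>x. (- c / \<delta>) * f' x + (a / \<delta>) * g' x)"
    using det by (auto simp: \<delta>_def[symmetric] fun_eq_iff field_simps)
  then have "{f, g} \<subseteq> fspan {f', g'}"
    unfolding fspan_pair by blast
  moreover have "{f', g'} \<subseteq> fspan {f, g}"
    unfolding fspan_pair assms(1,2) by blast
  ultimately show ?thesis
    using span_eq by blast
qed

lemma cos_sin_combinations_eq_phase_shifts:
  fixes \<theta> :: "'a \<Rightarrow> real"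
  shows "{(\<lambda>x. a * cos (\<theta> x) + b * sin (\<theta> x)) | a b. True}
    = {(\<lambda>x. L * sin (\<theta> x + \<eta>)) | L \<eta>. True}"
proof -
  have polar: "\<exists>L \<eta>. a = L * sin \<eta> \<and> b = L * cos \<eta>" for a b :: real
  proof (cases "a = 0 \<and> b = 0")
    case True
    then show ?thesis by auto
  next
    case False
    define L where "L = sqrt (a\<^sup>2 + b\<^sup>2)"
    have "a\<^sup>2 + b\<^sup>2 > 0"
      using False by (simp add: sum_power2_gt_zero_iff)
    then have "L > 0" and "L\<^sup>2 = a\<^sup>2 + b\<^sup>2"
      by (simp_all add: L_def)
    then have "(b / L)\<^sup>2 + (a / L)\<^sup>2 = 1"
      using False by (simp add: power_divide add_divide_distrib[symmetric] add.commute)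
    then obtain \<eta> where "b / L = cos \<eta>" "a / L = sin \<eta>"
      using sincos_total_2pi by blast
    with \<open>L > 0\<close> have "a = L * sin \<eta>" "b = L * cos \<eta>"
      by (simp_all add: field_simps)
    then show ?thesis by blast
  qed
  have shift: "(\<lambda>x. L * sin (\<theta> x + \<eta>)) = (\<lambda>x. (L * sin \<eta>) * cos (\<theta> x) + (L * cos \<eta>) * sin (\<theta> x))"
    for L \<eta> by (auto simp: fun_eq_iff sin_add algebra_simps)
  show ?thesis
  proof (intro set_eqI iffI)
    fix f
    assume "f \<in> {(\<lambda>x. a * cos (\<theta> x) + b * sin (\<theta> x)) | a b. True}"
    then obtain a b where "f = (\<lambda>x. a * cos (\<theta> x) + b * sin (\<theta> x))"
      by blast
    moreover obtain L \<eta> where "a = L * sin \<eta>" "b = L * cos \<eta>"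
      using polar by blast
    ultimately have "f = (\<lambda>x. L * sin (\<theta> x + \<eta>))"
      using shift by simp
    then show "f \<in> {(\<lambda>x. L * sin (\<theta> x + \<eta>)) | L \<eta>. True}"
      by blast
  next
    fix f
    assume "f \<in> {(\<lambda>x. L * sin (\<theta> x + \<eta>)) | L \<eta>. True}"
    then show "f \<in> {(\<lambda>x. a * cos (\<theta> x) + b * sin (\<theta> x)) | a b. True}"
      using shift by blast
  qed
qed

lemma integrable_mult_bounded:
  fixes h k :: "real \<Rightarrow> real"
  assumes h: "integrable lborel h" and k: "k \<in> borel_measurable borel" and bound: "\<And>x. \<bar>k x\<bar> \<le> B"
  shows "integrable lborel (\<lambda>z. h z * k z)"
proof (rule Bochner_Integration.integrable_bound)
  show "integrable lborel (\<lambda>z. B * h z)"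
    using h by simp
  show "(\<lambda>z. h z * k z) \<in> borel_measurable lborel"
    using h k by measurable
  have "\<bar>h z\<bar> * \<bar>k z\<bar> \<le> \<bar>h z\<bar> * \<bar>B\<bar>" for z
    using bound[of z] by (intro mult_left_mono) auto
  then show "AE z in lborel. norm (h z * k z) \<le> norm (B * h z)"
    by (simp add: abs_mult mult.commute)
qed

lemma pairing_transl: "pairing (transl x h) g = pairing h (\<lambda>z. g (x + z))"
  unfolding pairing_def transl_def
  using lborel_integral_real_affine[where c=1 and t=x and f="\<lambda>y. h (y - x) * g y"] by simp

lemma pairing_scale_right: "pairing h (\<lambda>y. c * g y) = c * pairing h g"
  unfolding pairing_def by (simp add: mult.left_commute)

lemma pairing_cos_sin_combination:
  assumes "integrable lborel h"
  shows "pairing h (\<lambda>y. a * cos (\<omega> * y) + b * sin (\<omega> * y))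
    = a * pairing h (\<lambda>y. cos (\<omega> * y)) + b * pairing h (\<lambda>y. sin (\<omega> * y))"
proof -
  have "integrable lborel (\<lambda>y. h y * cos (\<omega> * y))" "integrable lborel (\<lambda>y. h y * sin (\<omega> * y))"
    by (rule integrable_mult_bounded[OF assms, where B=1]; simp)+
  then show ?thesis
    unfolding pairing_def by (simp add: distrib_left mult.left_commute)
qed

lemma pairing_transl_cos:
  assumes "integrable lborel h"
  shows "pairing (transl x h) (\<lambda>y. cos (\<omega> * y))
    = cos (\<omega> * x) * pairing h (\<lambda>y. cos (\<omega> * y)) - sin (\<omega> * x) * pairing h (\<lambda>y. sin (\<omega> * y))"
  using pairing_cos_sin_combination[OF assms, of "cos (\<omega> * x)" \<omega> "- sin (\<omega> * x)"]
  by (simp add: pairing_transl distrib_left cos_add)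

lemma pairing_transl_sin:
  assumes "integrable lborel h"
  shows "pairing (transl x h) (\<lambda>y. sin (\<omega> * y))
    = sin (\<omega> * x) * pairing h (\<lambda>y. cos (\<omega> * y)) + cos (\<omega> * x) * pairing h (\<lambda>y. sin (\<omega> * y))"
  using pairing_cos_sin_combination[OF assms, of "sin (\<omega> * x)" \<omega> "cos (\<omega> * x)"]
  by (simp add: pairing_transl distrib_left sin_add)

definition fourier_cos :: "(real \<Rightarrow> real) \<Rightarrow> real" where
  "fourier_cos h = pairing h (\<lambda>y. cos (2 * pi * y))"

definition fourier_sin :: "(real \<Rightarrow> real) \<Rightarrow> real" where
  "fourier_sin h = pairing h (\<lambda>y. sin (2 * pi * y))"

lemma ebasis_one: "ebasis 1 = (\<lambda>y. sqrt 2 * cos (2 * pi * y))"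
  and ebasis_minus_one: "ebasis (-1) = (\<lambda>y. - sqrt 2 * sin (2 * pi * y))"
  by (auto simp: ebasis_def fun_eq_iff)

lemma bfrak_one_eq:
  assumes "integrable lborel h"
  shows "bfrak \<alpha> h 1 = (\<lambda>x. sqrt 2 * \<alpha> 1
    * (fourier_cos h * cos (2 * pi * x) - fourier_sin h * sin (2 * pi * x)))"
  unfolding fun_eq_iff bfrak_def ebasis_one pairing_scale_right pairing_transl_cos[OF assms]
  by (simp add: fourier_cos_def fourier_sin_def)

lemma bfrak_minus_one_eq:
  assumes "integrable lborel h"
  shows "bfrak \<alpha> h (-1) = (\<lambda>x. - sqrt 2 * \<alpha> (-1)
    * (fourier_sin h * cos (2 * pi * x) + fourier_cos h * sin (2 * pi * x)))"
  unfolding fun_eq_iff bfrak_def ebasis_minus_one pairing_scale_right pairing_transl_sin[OF assms]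
  by (simp add: fourier_cos_def fourier_sin_def algebra_simps)

lemma fourier_coeffs_nonzero:
  assumes "integrable lborel h" and "pairing h (\<lambda>y. sin (2 * pi * y + x)) \<noteq> 0"
  shows "(fourier_cos h)\<^sup>2 + (fourier_sin h)\<^sup>2 > 0"
proof -
  have "pairing h (\<lambda>y. sin (2 * pi * y + x)) = sin x * fourier_cos h + cos x * fourier_sin h"
    using pairing_cos_sin_combination[OF assms(1), of "sin x" "2 * pi" "cos x"]
    by (simp add: fourier_cos_def fourier_sin_def sin_add algebra_simps)
  then show ?thesis
    using assms(2) by (auto simp: sum_power2_gt_zero_iff)
qed

lemma rotation_sum_squares:
  fixes C S t :: real
  shows "(C * cos t - S * sin t)\<^sup>2 + (S * cos t + C * sin t)\<^sup>2 = C\<^sup>2 + S\<^sup>2"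
proof -
  have "(C * cos t - S * sin t)\<^sup>2 + (S * cos t + C * sin t)\<^sup>2
      = (C\<^sup>2 + S\<^sup>2) * ((sin t)\<^sup>2 + (cos t)\<^sup>2)"
    by algebra
  then show ?thesis by (simp only: sin_cos_squared_add mult_1_right)
qed

lemma scaled_rotation_sum_squares_pos:
  fixes C S u v t :: real
  assumes "u \<noteq> 0" and "v \<noteq> 0" and "C\<^sup>2 + S\<^sup>2 > 0"
  shows "(u * (C * cos t - S * sin t))\<^sup>2 + (v * (S * cos t + C * sin t))\<^sup>2 > 0"
proof -
  have "C * cos t - S * sin t \<noteq> 0 \<or> S * cos t + C * sin t \<noteq> 0"
    using assms(3) rotation_sum_squares[of C t S] by auto
  then show ?thesis
    using assms(1,2) by (auto simp: sum_power2_gt_zero_iff)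
qed

lemma fspan_scaled_rotation:
  fixes f g :: "'a \<Rightarrow> real"
  assumes "u \<noteq> 0" and "v \<noteq> 0" and "C\<^sup>2 + S\<^sup>2 > 0"
  shows "fspan {\<lambda>x. u * (C * f x - S * g x), \<lambda>x. v * (S * f x + C * g x)} = fspan {f, g}"
proof (rule fspan_pair_eq_fspan_pair)
  have "u * C * (v * C) - - (u * S) * (v * S) = u * v * (C\<^sup>2 + S\<^sup>2)"
    by (simp add: power2_eq_square algebra_simps)
  then show "u * C * (v * C) - - (u * S) * (v * S) \<noteq> 0"
    using assms by (metis mult_eq_0_iff order_less_irrefl)
qed (auto simp: fun_eq_iff algebra_simps)

theorem lemma4p3:
  fixes \<alpha> :: "int \<Rightarrow> real" and h :: "real \<Rightarrow> real"
  assumes h_int: "integrable lborel h"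
    and a1: "\<alpha> 1 \<noteq> 0" and am1: "\<alpha> (-1) \<noteq> 0"
    and nondeg: "\<exists>x. pairing h (\<lambda>y. sin (2 * pi * y + x)) \<noteq> 0"
  shows "(\<forall>x. (bfrak \<alpha> h 1 x)\<^sup>2 + (bfrak \<alpha> h (-1) x)\<^sup>2 > 0)
    \<and> fspan {bfrak \<alpha> h 1, bfrak \<alpha> h (-1)} = fspan {\<lambda>x. cos (2 * pi * x), \<lambda>x. sin (2 * pi * x)}
    \<and> fspan {\<lambda>x. cos (2 * pi * x), \<lambda>x. sin (2 * pi * x)}
        = {(\<lambda>x. L * sin (2 * pi * x + \<eta>)) | L \<eta>. True}"
proof -
  have CS: "(fourier_cos h)\<^sup>2 + (fourier_sin h)\<^sup>2 > 0"
    using nondeg fourier_coeffs_nonzero[OF h_int] by blast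
  have u: "sqrt 2 * \<alpha> 1 \<noteq> 0" and v: "- sqrt 2 * \<alpha> (-1) \<noteq> 0"
    using a1 am1 by simp_all
  show ?thesis
    unfolding bfrak_one_eq[OF h_int] bfrak_minus_one_eq[OF h_int]
    using scaled_rotation_sum_squares_pos[OF u v CS]
      fspan_scaled_rotation[OF u v CS, of "\<lambda>x. cos (2 * pi * x)" "\<lambda>x. sin (2 * pi * x)"]
      cos_sin_combinations_eq_phase_shifts[of "\<lambda>x. 2 * pi * x"]
    by (simp add: fspan_pair)
qed

end
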